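(* Let $n,m\ge 0$ and let $k_1\ge\dots\ge k_n\ge 0$ and $l_1\ge\dots\ge l_m\ge 0$ be integers. If \[ \prod_{i=1}^n\left(5\cdot\left(\tfrac32\right)^{k_i-1}\left(2^{2k_i-1}+1\right)\right)=\prod_{j=1}^m\left(5\cdot\left(\tfrac32\right)^{l_j-1}\left(2^{2l_j-1}+1\right)\right) \] as rational numbers, then $n=m$ and $(k_1,\dots,k_n)=(l_1,\dots,l_m)$. *)

theory Defs
  imports Complex_Main
begin

text \<open>The factor 5 * (3/2)^(k-1) * (2^(2k-1) + 1), evaluated in the rationals with
  integer exponents (so k = 0 is allowed).\<close>
definition fac :: "nat \<Rightarrow> rat" where
  "fac k = 5 * (3/2) powi (int k - 1) * (2 powi (2 * int k - 1) + 1)"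

end

theory Submission
  imports Defs "HOL-Number_Theory.Number_Theory"
begin

text \<open>Write \<open>fac k = u\<^sub>k / 2^(k-1)\<close> with \<open>u\<^sub>k = fac_numerator k\<close> odd. Equal products then
  have equal odd parts and equal powers of 2, and comparing the largest entries of the two sorted
  lists reduces the claim to: \<open>u\<^sub>K\<close> times anything never equals a product of \<open>u\<^sub>y\<close> with all
  \<open>y < K\<close>. For \<open>K \<le> 2\<close> the factors 5 and 3 and the power of 2 decide this. For \<open>K \<ge> 3\<close> the
  number \<open>2^(2K-1) + 1\<close> has a primitive prime divisor, i.e. one dividing no \<open>2^b + 1\<close> with
  \<open>b < 2K-1\<close> odd; it divides \<open>u\<^sub>K\<close> but no \<open>u\<^sub>y\<close>.

  The primitive divisor of \<open>2^a + 1\<close> (\<open>a \<ge> 5\<close> odd) comes from the classical proof of Zsigmondy's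
  theorem: \<open>\<Phi>\<^sub>2\<^sub>a(2)\<close> is an alternating product of the numbers \<open>2^d + 1\<close>, \<open>d\<close> ranging over
  the divisors \<open>a / \<Prod>T\<close> for sets \<open>T\<close> of primes dividing \<open>a\<close>. Lifting the exponent shows that,
  absent a primitive prime, this quotient divides a single exceptional prime \<open>s\<close> dividing \<open>a\<close>,
  while its size exceeds \<open>2^\<phi>(a) / 3 \<ge> s\<close>.\<close>

lemma prime_dvd_pow2_plus1_iff_ord:
  fixes p m :: nat
  assumes p: "prime p" "odd p"
  shows "p dvd 2^m + 1 \<longleftrightarrow> ord p 2 dvd 2*m \<and> \<not> ord p 2 dvd m"
proof -
  have sq: "(2::nat)^(2*m) - 1 = (2^m + 1) * (2^m - 1)"
    by (simp add: power_mult power2_eq_square algebra_simps diff_mult_distrib2)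
  have "\<not> p dvd 2^m + 1" if "p dvd 2^m - 1"
  proof
    assume "p dvd 2^m + 1"
    then have "p dvd (2^m + 1) - (2^m - 1)" using that by (rule dvd_diff_nat)
    moreover have "(2::nat)^m + 1 - (2^m - 1) = 2"
      using one_le_power[of "2::nat" m] by linarith
    ultimately show False
      using primes_dvd_imp_eq[OF p(1) two_is_prime_nat] p(2) by auto
  qed
  moreover have "p dvd 2^(2*m) - 1 \<longleftrightarrow> p dvd 2^m + 1 \<or> p dvd 2^m - 1"
    unfolding sq using p(1) by (rule prime_dvd_mult_iff)
  moreover have "ord p 2 dvd k \<longleftrightarrow> p dvd 2^k - 1" for k
    using cong_altdef_nat[of 1 "2^k" p] by (simp add: ord_divides[symmetric])
  ultimately show ?thesis by blast
qed

lemma dvd_pow2_plus1_imp_odd: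
  fixes p a :: nat
  assumes "a > 0" "p dvd 2^a + 1"
  shows "odd p"
proof -
  have "odd ((2::nat)^a + 1)" using assms(1) by simp
  then show ?thesis using assms(2) dvd_trans[of 2 p] by blast
qed

text \<open>For a prime \<open>p\<close> dividing \<open>2^a + 1\<close> with \<open>a\<close> odd, \<open>ord p 2 = 2 * half_ord p\<close> and the odd
  \<open>m\<close> with \<open>p dvd 2^m + 1\<close> are exactly the odd multiples of \<open>half_ord p\<close>; so \<open>p\<close> is a primitive
  prime divisor of \<open>2^a + 1\<close> iff \<open>half_ord p = a\<close>.\<close>
definition half_ord :: "nat \<Rightarrow> nat" where
  "half_ord p = ord p 2 div 2"

lemma half_ord:
  fixes p a :: nat
  assumes p: "prime p" and a: "odd a" and pa: "p dvd 2^a + 1"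
  shows "ord p 2 = 2 * half_ord p" and "half_ord p dvd a"
proof -
  have podd: "odd p" using dvd_pow2_plus1_imp_odd[OF odd_pos[OF a] pa] .
  have o: "ord p 2 dvd 2*a" "\<not> ord p 2 dvd a"
    using prime_dvd_pow2_plus1_iff_ord[OF p podd] pa by auto
  have "even (ord p 2)"
  proof (rule ccontr)
    assume "odd (ord p 2)"
    then have "coprime (ord p 2) 2" by simp
    with o show False using coprime_dvd_mult_right_iff by blast
  qed
  then show ord: "ord p 2 = 2 * half_ord p" by (simp add: half_ord_def)
  show "half_ord p dvd a" using o(1) by (subst (asm) ord) simp
qed

lemma prime_dvd_pow2_plus1_iff_half_ord_dvd:
  fixes p a m :: nat
  assumes p: "prime p" and a: "odd a" and pa: "p dvd 2^a + 1" and m: "odd m"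
  shows "p dvd 2^m + 1 \<longleftrightarrow> half_ord p dvd m"
proof -
  have "odd p" using dvd_pow2_plus1_imp_odd[OF odd_pos[OF a] pa] .
  moreover have "\<not> 2 * half_ord p dvd m" using m by (metis dvd_mult_left dvd_trans)
  ultimately show ?thesis
    using prime_dvd_pow2_plus1_iff_ord[OF p] half_ord(1)[OF p a pa] by simp
qed

lemma half_ord_less:
  fixes p a :: nat
  assumes p: "prime p" and a: "odd a" and pa: "p dvd 2^a + 1"
  shows "half_ord p < p"
proof -
  have "odd p" using dvd_pow2_plus1_imp_odd[OF odd_pos[OF a] pa] .
  then have "\<not> p dvd 2" using primes_dvd_imp_eq[OF p two_is_prime_nat] by auto
  then have "ord p 2 dvd p - 1"
    using fermat_theorem[OF p] ord_divides by blast
  moreover have "p - 1 > 0" using prime_gt_1_nat[OF p] by simp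
  ultimately have "2 * half_ord p \<le> p - 1"
    unfolding half_ord(1)[OF p a pa] by (rule dvd_imp_le)
  then show ?thesis using prime_gt_1_nat[OF p] by linarith
qed

lemma pow_plus1_factor:
  fixes x q :: nat
  assumes "odd q"
  shows "int (x^q + 1) = int (x + 1) * (\<Sum>i<q. (- int x)^i)"
proof -
  have "1 - (- int x)^q = (1 - (- int x)) * (\<Sum>i<q. (- int x)^i)"
    by (rule one_diff_power_eq)
  then show ?thesis using assms by (simp add: power_minus_odd)
qed

lemma pow_plus1_dvd:
  fixes x q :: nat
  assumes "odd q"
  shows "x + 1 dvd x^q + 1"
  using pow_plus1_factor[OF assms, of x] by (metis dvd_triv_left int_dvd_int_iff)

lemma geometric_sum_cong:
  fixes z :: int
  assumes "[z = 1] (mod m)"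
  shows "[(\<Sum>i<n. z^i) = int n] (mod m)"
proof -
  have "[(\<Sum>i<n. z^i) = (\<Sum>i<n. 1^i)] (mod m)"
    by (intro cong_sum cong_pow assms)
  then show ?thesis by simp
qed

lemma square_dvd_geometric_sum_minus:
  fixes z :: int and p :: nat
  assumes "odd p" "int p dvd z - 1"
  shows "int p ^ 2 dvd (\<Sum>i<p. z^i) - int p"
proof -
  have "[z = 1] (mod int p)" using assms(2) by (simp add: cong_iff_dvd_diff)
  then have cong: "[(\<Sum>i<p. \<Sum>j<i. z^j) = (\<Sum>i<p. int i)] (mod int p)"
    by (intro cong_sum geometric_sum_cong)
  have "int p dvd (\<Sum>i<p. int i)"
  proof -
    obtain k where k: "p = 2 * k + 1" using assms(1) oddE by blast
    have "(\<Sum>i<2*k+1. i) = (2*k + 1) * k"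
      by (induction k) (simp_all add: algebra_simps)
    then have "(\<Sum>i<p. i) = p * k" using k by simp
    then show ?thesis by (simp flip: of_nat_sum)
  qed
  then have "int p dvd (\<Sum>i<p. \<Sum>j<i. z^j)" using cong_dvd_iff[OF cong] by blast
  then have "int p * int p dvd (z - 1) * (\<Sum>i<p. \<Sum>j<i. z^j)"
    using assms(2) by (simp add: mult_dvd_mono)
  also have "(z - 1) * (\<Sum>i<p. \<Sum>j<i. z^j) = (\<Sum>i<p. z^i - 1)"
    by (simp add: power_diff_1_eq sum_distrib_left)
  also have "\<dots> = (\<Sum>i<p. z^i) - int p"
    by (simp add: sum_subtractf)
  finally show ?thesis by (simp only: power2_eq_square)
qed

lemma multiplicity_of_nat: "multiplicity (int p) (int n) = multiplicity p n"
proof -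
  have "int p ^ k dvd int n \<longleftrightarrow> p ^ k dvd n" for k
    by (metis int_dvd_int_iff of_nat_power)
  then show ?thesis by (simp add: multiplicity_def)
qed

lemma multiplicity_geometric_sum_prime:
  fixes z :: int and p q :: nat
  assumes p: "prime p" "odd p" and z: "int p dvd z - 1" and q: "prime q"
  shows "multiplicity (int p) (\<Sum>i<q. z^i) = of_bool (p = q)"
proof (cases "p = q")
  case False
  have "[z = 1] (mod int p)" using z by (simp add: cong_iff_dvd_diff)
  then have "[(\<Sum>i<q. z^i) = int q] (mod int p)" by (rule geometric_sum_cong)
  moreover have "\<not> int p dvd int q" using False primes_dvd_imp_eq[OF p(1) q] by auto
  ultimately have "\<not> int p dvd (\<Sum>i<q. z^i)" using cong_dvd_iff by blast
  then show ?thesis using False by (simp add: not_dvd_imp_multiplicity_0)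
next
  case True
  define Y where "Y = (\<Sum>i<q. z^i)"
  have d: "int p ^ 2 dvd Y - int p"
    unfolding Y_def using square_dvd_geometric_sum_minus[OF p(2) z] True by simp
  then have "int p dvd Y - int p" by (rule dvd_trans[rotated]) (simp add: power2_eq_square)
  then have "int p ^ 1 dvd Y" using dvd_add[OF _ dvd_refl[of "int p"]] by fastforce
  moreover have "\<not> int p ^ Suc 1 dvd Y"
  proof
    assume "int p ^ Suc 1 dvd Y"
    then have "int p ^ 2 dvd Y" by (simp add: power2_eq_square)
    then have "int p ^ 2 dvd int p" using dvd_diff[OF _ d] by fastforce
    then have "int p * int p dvd int p * 1" by (simp add: power2_eq_square)
    then have "int p dvd 1" using prime_gt_0_nat[OF p(1)] by (simp only: dvd_times_left_cancel_iff)
    then show False using prime_gt_1_nat[OF p(1)] by simp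
  qed
  ultimately show ?thesis using True by (simp add: Y_def multiplicity_eqI)
qed

lemma multiplicity_pow_plus1_prime:
  fixes x p q :: nat
  assumes p: "prime p" "odd p" "p dvd x + 1" and q: "prime q" "odd q"
  shows "multiplicity p (x^q + 1) = multiplicity p (x + 1) + of_bool (p = q)"
proof -
  define Y where "Y = (\<Sum>i<q. (- int x)^i)"
  have factor: "int (x^q + 1) = int (x + 1) * Y"
    unfolding Y_def by (rule pow_plus1_factor[OF q(2)])
  moreover have "int (x^q + 1) \<noteq> 0" by (simp only: of_nat_eq_0_iff)
  ultimately have "Y \<noteq> 0" by auto
  have "- int x - 1 = - int (x + 1)" by simp
  then have "int p dvd - int x - 1" using p(3) by (simp only: dvd_minus_iff int_dvd_int_iff)
  then have mY: "multiplicity (int p) Y = of_bool (p = q)"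
    unfolding Y_def using multiplicity_geometric_sum_prime[OF p(1,2) _ q(1)] by simp
  have "multiplicity p (x^q + 1) = multiplicity (int p) (int (x + 1) * Y)"
    by (simp only: multiplicity_of_nat flip: factor)
  also have "\<dots> = multiplicity p (x + 1) + multiplicity (int p) Y"
    using \<open>Y \<noteq> 0\<close> p(1) multiplicity_of_nat[of p "x + 1"]
    by (simp add: prime_elem_multiplicity_mult_distrib)
  finally show ?thesis using mY by simp
qed

lemma multiplicity_pow_plus1:
  fixes x p n :: nat
  assumes p: "prime p" "odd p" "p dvd x + 1" and n: "odd n"
  shows "multiplicity p (x^n + 1) = multiplicity p (x + 1) + multiplicity p n"
  using n
proof (induction n rule: less_induct)
  case (less n)
  show ?case
  proof (cases "n = 1")
    case False
    obtain q where q: "prime q" "q dvd n" using False prime_factor_nat by blast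
    then obtain r where r: "n = q * r" by blast
    have odd: "odd q" "odd r" using less.prems r by auto
    then have "r < n" using r prime_gt_1_nat[OF q(1)] by (simp add: odd_pos)
    then have IH: "multiplicity p (x^r + 1) = multiplicity p (x + 1) + multiplicity p r"
      using less.IH odd(2) by blast
    have "p dvd x^r + 1" using p(3) pow_plus1_dvd[OF odd(2)] by (rule dvd_trans)
    then have "multiplicity p ((x^r)^q + 1) = multiplicity p (x^r + 1) + of_bool (p = q)"
      using multiplicity_pow_plus1_prime[OF p(1,2) _ q(1) odd(1)] by blast
    moreover have "multiplicity p n = of_bool (p = q) + multiplicity p r"
      using p(1) q(1) odd by (simp add: r prime_elem_multiplicity_mult_distrib prime_multiplicity_other odd_pos)
    moreover have "x^n = (x^r)^q" by (metis r power_mult mult.commute)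
    ultimately show ?thesis using IH by simp
  qed simp
qed

lemma half_ord_odd:
  fixes p a :: nat
  assumes "prime p" "odd a" "p dvd 2^a + 1"
  shows "odd (half_ord p)"
  using half_ord(2)[OF assms] assms(2) dvd_trans[of 2 "half_ord p" a] by blast

lemma multiplicity_pow2_plus1:
  fixes p a m :: nat
  assumes p: "prime p" and a: "odd a" and pa: "p dvd 2^a + 1" and m: "odd m"
  shows "multiplicity p (2^m + 1) =
    (if half_ord p dvd m then multiplicity p (2^half_ord p + 1) + multiplicity p (m div half_ord p) else 0)"
proof (cases "half_ord p dvd m")
  case True
  define t where "t = half_ord p"
  have t: "odd t" "p dvd 2^t + 1"
    using half_ord_odd[OF p a pa] prime_dvd_pow2_plus1_iff_half_ord_dvd[OF p a pa] by (simp_all add: t_def)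
  obtain k where k: "m = t * k" using True by (auto simp: t_def)
  then have "odd k" using m by simp
  moreover have "odd p" using dvd_pow2_plus1_imp_odd[OF odd_pos[OF a] pa] .
  ultimately have "multiplicity p ((2^t)^k + 1) = multiplicity p (2^t + 1) + multiplicity p k"
    using multiplicity_pow_plus1[OF p _ t(2)] by blast
  then show ?thesis using True t(1) by (simp add: k t_def power_mult odd_pos)
next
  case False
  then have "\<not> p dvd 2^m + 1" using prime_dvd_pow2_plus1_iff_half_ord_dvd[OF p a pa m] by simp
  then show ?thesis using False by (simp add: not_dvd_imp_multiplicity_0)
qed

lemma prod_dvd_if_subset_prime_factors:
  fixes n :: nat
  assumes "n \<noteq> 0" "T \<subseteq> prime_factors n"
  shows "\<Prod>T dvd n"
proof -
  have "\<Prod>T dvd (\<Prod>q\<in>T. q ^ multiplicity q n)"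
    using assms(2) by (intro prod_dvd_prod) (auto simp: prime_factors_multiplicity dvd_power)
  also have "\<dots> dvd (\<Prod>q\<in>prime_factors n. q ^ multiplicity q n)"
    using assms(2) by (intro prod_dvd_prod_subset) auto
  also have "\<dots> = n" using assms(1) by (simp flip: prime_factorization_nat)
  finally show ?thesis .
qed

lemma prod_dvd_iff_subset_prime_factors:
  fixes n :: nat
  assumes "n \<noteq> 0" "finite T" "\<forall>q\<in>T. prime q"
  shows "\<Prod>T dvd n \<longleftrightarrow> T \<subseteq> prime_factors n"
proof
  assume "\<Prod>T dvd n"
  moreover have "q dvd \<Prod>T" if "q \<in> T" for q using dvd_prodI[of T q "\<lambda>x. x"] that assms(2) by simp
  ultimately have "q dvd n" if "q \<in> T" for q using that dvd_trans by blast
  then show "T \<subseteq> prime_factors n" using assms by (auto simp: in_prime_factors_iff)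
qed (use prod_dvd_if_subset_prime_factors assms in blast)

lemma prime_factors_prod_primes:
  fixes T :: "nat set"
  assumes "finite T" "\<forall>q\<in>T. prime q"
  shows "prime_factors (\<Prod>T) = T"
proof -
  have "0 \<notin> id ` T" using assms by auto
  then have "prime_factors (\<Prod>T) = \<Union>((prime_factors \<circ> id) ` T)"
    using prime_factors_prod[OF assms(1), of id] by simp
  also have "\<dots> = T" using assms(2) by (auto simp: prime_prime_factors)
  finally show ?thesis .
qed

lemma multiplicity_prod_primes:
  fixes T :: "nat set"
  assumes "finite T" "\<forall>q\<in>T. prime q" "prime p"
  shows "multiplicity p (\<Prod>T) = of_bool (p \<in> T)"
proof -
  have "0 \<notin> id ` T" using assms by auto
  then have "multiplicity p (\<Prod>T) = (\<Sum>q\<in>T. multiplicity p q)"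
    using prime_elem_multiplicity_prod_distrib[of p id T] assms by simp
  also have "\<dots> = (\<Sum>q\<in>T. of_bool (q = p))"
    using assms by (intro sum.cong) (auto simp: prime_multiplicity_other)
  also have "\<dots> = of_bool (p \<in> T)" using assms(1) by simp
  finally show ?thesis .
qed

definition even_subsets :: "'a set \<Rightarrow> 'a set set" where
  "even_subsets A = {T \<in> Pow A. even (card T)}"

definition odd_subsets :: "'a set \<Rightarrow> 'a set set" where
  "odd_subsets A = {T \<in> Pow A. odd (card T)}"

lemma finite_even_odd_subsets [simp]:
  "finite A \<Longrightarrow> finite (even_subsets A)" "finite A \<Longrightarrow> finite (odd_subsets A)"
  by (simp_all add: even_subsets_def odd_subsets_def)

lemma sum_Pow_alternating:
  fixes f :: "'a set \<Rightarrow> 'b::comm_ring_1"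
  assumes "finite A"
  shows "(\<Sum>T\<in>Pow A. (-1)^card T * f T) = sum f (even_subsets A) - sum f (odd_subsets A)"
proof -
  have "(\<Sum>T\<in>Pow A. (-1)^card T * f T) = (\<Sum>T\<in>Pow A. if even (card T) then f T else - f T)"
    by (intro sum.cong) auto
  also have "\<dots> = sum f (even_subsets A) + (\<Sum>T\<in>odd_subsets A. - f T)"
    using assms by (simp add: sum.If_cases even_subsets_def odd_subsets_def Int_def)
  finally show ?thesis by (simp add: sum_negf)
qed

lemma sum_Pow_neg_one_pow_card:
  assumes "finite A"
  shows "(\<Sum>T\<in>Pow A. (-1::'b::comm_ring_1)^card T) = of_bool (A = {})"
proof -
  have "(\<Prod>x\<in>A. (1::'b) - 1) = (\<Sum>T\<in>Pow A. (-1)^card T * (\<Prod>x\<in>T. 1) * (\<Prod>x\<in>A - T. 1))"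
    by (rule prod_diff_conv_sum[OF assms])
  then show ?thesis using assms by (cases "A = {}") (simp_all add: power_0_left)
qed

lemma sum_Pow_neg_one_pow_card_member:
  assumes "finite A"
  shows "(\<Sum>T\<in>Pow A. (-1::'b::comm_ring_1)^card T * of_bool (p \<in> T)) = - of_bool (A = {p})"
proof (cases "p \<in> A")
  case True
  define B where "B = A - {p}"
  have A: "A = insert p B" "p \<notin> B" "finite B" using True assms by (auto simp: B_def)
  have members: "{T \<in> Pow A. p \<in> T} = insert p ` Pow B"
  proof (intro equalityI subsetI)
    fix T assume "T \<in> {T \<in> Pow A. p \<in> T}"
    then have "T = insert p (T - {p})" "T - {p} \<in> Pow B" using A by auto
    then show "T \<in> insert p ` Pow B" by (rule image_eqI)
  qed (use A in auto)
  have "(\<Sum>T\<in>Pow A. (-1::'b)^card T * of_bool (p \<in> T)) = (\<Sum>T\<in>Pow A. if p \<in> T then (-1)^card T else 0)"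
    by (intro sum.cong) auto
  also have "\<dots> = (\<Sum>T\<in>{T \<in> Pow A. p \<in> T}. (-1)^card T)"
    using assms by (simp only: sum.inter_filter finite_Pow_iff)
  also have "\<dots> = (\<Sum>T\<in>insert p ` Pow B. (-1)^card T)" by (simp only: members)
  also have "\<dots> = (\<Sum>T\<in>Pow B. (-1)^card (insert p T))"
    using A by (intro sum.reindex_cong[of "insert p"] inj_onI) auto
  also have "\<dots> = - (\<Sum>T\<in>Pow B. (-1)^card T)"
  proof -
    have "(-1::'b)^card (insert p T) = - ((-1)^card T)" if "T \<in> Pow B" for T
      using that A finite_subset[of T B] by (auto simp: card_insert_if)
    then show ?thesis by (simp add: sum_negf[symmetric])
  qed
  also have "\<dots> = - of_bool (B = {})" using A(3) by (simp add: sum_Pow_neg_one_pow_card)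
  finally show ?thesis using A(1,2) by auto
next
  case False
  then have "(-1::'b)^card T * of_bool (p \<in> T) = 0" if "T \<in> Pow A" for T
    using that by auto
  then show ?thesis using False by auto
qed

lemma pow2_plus1_dvd:
  fixes a d :: nat
  assumes "odd a" "d dvd a"
  shows "(2::nat)^d + 1 dvd 2^a + 1"
proof -
  obtain k where k: "a = d * k" using assms(2) by blast
  then have "odd k" using assms(1) by simp
  then show ?thesis using pow_plus1_dvd[of k "2^d"] by (simp add: k power_mult)
qed

lemma dvd_div_prod_iff_subset:
  fixes a d :: nat
  assumes "a \<noteq> 0" "d dvd a" "T \<subseteq> prime_factors a"
  shows "d dvd a div \<Prod>T \<longleftrightarrow> T \<subseteq> prime_factors (a div d)"
proof -
  have T: "finite T" "\<forall>q\<in>T. prime q" using assms(3) finite_subset by auto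
  have "\<Prod>T dvd a" "\<Prod>T \<noteq> 0"
    using prod_dvd_if_subset_prime_factors assms T by (auto simp: prime_gt_0_nat)
  moreover have "d \<noteq> 0" "a div d \<noteq> 0" using assms by auto
  ultimately have "d dvd a div \<Prod>T \<longleftrightarrow> \<Prod>T dvd a div d"
    using assms(2) by (simp add: dvd_div_iff_mult mult.commute)
  also have "\<dots> \<longleftrightarrow> T \<subseteq> prime_factors (a div d)"
    using \<open>a div d \<noteq> 0\<close> T by (rule prod_dvd_iff_subset_prime_factors)
  finally show ?thesis .
qed

lemma multiplicity_div_prod_primes:
  fixes n p :: nat
  assumes "n \<noteq> 0" "T \<subseteq> prime_factors n" "prime p"
  shows "multiplicity p (n div \<Prod>T) + of_bool (p \<in> T) = multiplicity p n"
proof -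
  have T: "finite T" "\<forall>q\<in>T. prime q" using assms(2) finite_subset by auto
  have "n = (n div \<Prod>T) * \<Prod>T"
    using prod_dvd_if_subset_prime_factors[OF assms(1,2)] by simp
  moreover have "\<Prod>T \<noteq> 0" using T by (auto simp: prime_gt_0_nat)
  ultimately have "multiplicity p n = multiplicity p (n div \<Prod>T) + multiplicity p (\<Prod>T)"
    using assms(1,3) by (metis mult_eq_0_iff prime_elem_multiplicity_mult_distrib prime_imp_prime_elem)
  then show ?thesis using multiplicity_prod_primes[OF T assms(3)] by simp
qed

lemma multiplicity_pow2_plus1_div_prod:
  fixes a p :: nat
  assumes a: "odd a" and p: "prime p" "p dvd 2^a + 1" and T: "T \<subseteq> prime_factors a"
  defines "t \<equiv> half_ord p"
  shows "int (multiplicity p (2^(a div \<Prod>T) + 1)) =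
    (if T \<subseteq> prime_factors (a div t)
     then int (multiplicity p (2^t + 1)) + int (multiplicity p (a div t)) - of_bool (p \<in> T)
     else 0)"
proof -
  have "a \<noteq> 0" using odd_pos[OF a] by simp
  have t: "t dvd a" "t \<noteq> 0" using half_ord(2)[OF p(1) a p(2)] \<open>a \<noteq> 0\<close> by (auto simp: t_def)
  have "\<Prod>T dvd a" using prod_dvd_if_subset_prime_factors[OF \<open>a \<noteq> 0\<close> T] .
  then have "odd (a div \<Prod>T)" using a by (metis dvd_div_mult_self even_mult_iff)
  then have val: "multiplicity p (2^(a div \<Prod>T) + 1) =
      (if t dvd a div \<Prod>T then multiplicity p (2^t + 1) + multiplicity p (a div \<Prod>T div t) else 0)"
    unfolding t_def by (rule multiplicity_pow2_plus1[OF p(1) a p(2)])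
  show ?thesis
  proof (cases "T \<subseteq> prime_factors (a div t)")
    case True
    have "a div \<Prod>T div t = a div t div \<Prod>T" by (simp add: div_mult2_eq[symmetric] mult.commute)
    then have "multiplicity p (a div \<Prod>T div t) + of_bool (p \<in> T) = multiplicity p (a div t)"
      using multiplicity_div_prod_primes[OF _ True p(1)] t \<open>a \<noteq> 0\<close> by auto
    then show ?thesis
      using val True dvd_div_prod_iff_subset[OF \<open>a \<noteq> 0\<close> t(1) T] by (cases "p \<in> T") auto
  next
    case False
    then show ?thesis using val dvd_div_prod_iff_subset[OF \<open>a \<noteq> 0\<close> t(1) T] by simp
  qed
qed

text \<open>For odd \<open>a\<close>, Moebius inversion over the squarefree divisors of \<open>a\<close> gives
  \<open>cyclotomic_num a / cyclotomic_den a = \<Phi>\<^sub>2\<^sub>a(2)\<close>, the cyclotomic polynomial of order \<open>2a\<close> evaluated at 2.\<close>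
definition cyclotomic_num :: "nat \<Rightarrow> nat" where
  "cyclotomic_num a = (\<Prod>T\<in>even_subsets (prime_factors a). 2^(a div \<Prod>T) + 1)"

definition cyclotomic_den :: "nat \<Rightarrow> nat" where
  "cyclotomic_den a = (\<Prod>T\<in>odd_subsets (prime_factors a). 2^(a div \<Prod>T) + 1)"

lemma cyclotomic_num_pos: "cyclotomic_num a > 0" and cyclotomic_den_pos: "cyclotomic_den a > 0"
  by (simp_all add: cyclotomic_num_def cyclotomic_den_def prod_pos)

lemma multiplicity_prod_pow2_plus1:
  fixes p :: nat
  assumes "prime p" "finite S"
  shows "multiplicity p (\<Prod>T\<in>S. 2^(f T) + 1) = (\<Sum>T\<in>S. multiplicity p (2^(f T) + 1))"
  using assms by (intro prime_elem_multiplicity_prod_distrib) auto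

lemma multiplicity_cyclotomic_num_den:
  fixes a p :: nat
  assumes a: "odd a" and p: "prime p" "p dvd 2^a + 1" and "half_ord p \<noteq> a"
  shows "int (multiplicity p (cyclotomic_num a)) =
    int (multiplicity p (cyclotomic_den a)) + of_bool (prime_factors (a div half_ord p) = {p})"
proof -
  define Q where "Q = prime_factors a"
  define R where "R = prime_factors (a div half_ord p)"
  define c where "c = int (multiplicity p (2^half_ord p + 1)) + int (multiplicity p (a div half_ord p))"
  define v where "v T = int (multiplicity p (2^(a div \<Prod>T) + 1))" for T
  have "a \<noteq> 0" "half_ord p dvd a" using odd_pos[OF a] half_ord(2)[OF p(1) a p(2)] by auto
  then have "a div half_ord p \<noteq> 1" "a div half_ord p \<noteq> 0" using assms(4) by (auto elim!: dvdE)
  then obtain q where "prime q" "q dvd a div half_ord p" using prime_factor_nat by blast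
  then have "q \<in> R" using \<open>a div half_ord p \<noteq> 0\<close> by (simp add: R_def in_prime_factors_iff)
  then have "R \<noteq> {}" by blast
  have "finite R" by (simp add: R_def)
  have "a div half_ord p dvd a" using \<open>half_ord p dvd a\<close> by (metis dvd_div_mult_self dvd_triv_left)
  then have "R \<subseteq> Q" using \<open>a \<noteq> 0\<close> by (simp add: R_def Q_def dvd_prime_factors)
  have v: "v T = (if T \<subseteq> R then c - of_bool (p \<in> T) else 0)" if "T \<in> Pow Q" for T
    using multiplicity_pow2_plus1_div_prod[OF a p] that by (simp add: v_def c_def R_def Q_def)
  have "multiplicity p (cyclotomic_num a) = (\<Sum>T\<in>even_subsets Q. multiplicity p (2^(a div \<Prod>T) + 1))"
    "multiplicity p (cyclotomic_den a) = (\<Sum>T\<in>odd_subsets Q. multiplicity p (2^(a div \<Prod>T) + 1))"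
    unfolding cyclotomic_num_def cyclotomic_den_def Q_def by (simp_all only: multiplicity_prod_pow2_plus1[OF p(1)] finite_even_odd_subsets finite_set_mset)
  then have "int (multiplicity p (cyclotomic_num a)) - int (multiplicity p (cyclotomic_den a)) = sum v (even_subsets Q) - sum v (odd_subsets Q)"
    by (simp add: v_def)
  also have "\<dots> = (\<Sum>T\<in>Pow Q. (-1)^card T * v T)"
    by (simp add: sum_Pow_alternating Q_def)
  also have "\<dots> = (\<Sum>T\<in>Pow R. (-1)^card T * (c - of_bool (p \<in> T)))"
    using v \<open>R \<subseteq> Q\<close> by (intro sum.mono_neutral_cong_right) (auto simp: Q_def)
  also have "\<dots> = c * (\<Sum>T\<in>Pow R. (-1)^card T) - (\<Sum>T\<in>Pow R. (-1)^card T * of_bool (p \<in> T))"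
    by (simp add: algebra_simps sum_subtractf sum_distrib_left)
  also have "\<dots> = of_bool (R = {p})"
    unfolding sum_Pow_neg_one_pow_card[OF \<open>finite R\<close>] sum_Pow_neg_one_pow_card_member[OF \<open>finite R\<close>]
    using \<open>R \<noteq> {}\<close> by simp
  finally show ?thesis by (simp add: R_def)
qed

text \<open>If \<open>2^a + 1\<close> has no primitive prime divisor, these are the only primes occurring more often
  in \<open>cyclotomic_num a\<close> than in \<open>cyclotomic_den a\<close>, each exactly once more.\<close>
definition exceptional_primes :: "nat \<Rightarrow> nat set" where
  "exceptional_primes a = {p. prime p \<and> p dvd 2^a + 1 \<and> prime_factors (a div half_ord p) = {p}}"

lemma exceptional_prime_dvd:
  assumes "odd a" "p \<in> exceptional_primes a"
  shows "p dvd a"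
proof -
  have p: "prime p" "p dvd 2^a + 1" "p \<in> prime_factors (a div half_ord p)"
    using assms(2) by (auto simp: exceptional_primes_def)
  then have "p dvd a div half_ord p" by auto
  then show ?thesis using half_ord(2)[OF p(1) assms(1) p(2)] by (metis dvd_div_mult_self dvd_mult2)
qed

lemma exceptional_primes_unique:
  assumes a: "odd a" and "p \<in> exceptional_primes a" "q \<in> exceptional_primes a"
  shows "p = q"
proof -
  have contra: False if p: "p \<in> exceptional_primes a" and q: "q \<in> exceptional_primes a" and "p < q" for p q
  proof -
    have "prime p" "p dvd 2^a + 1" "prime_factors (a div half_ord p) = {p}" "prime q"
      using p q by (auto simp: exceptional_primes_def)
    then have t: "half_ord p dvd a" "half_ord p < p"
      using half_ord(2) half_ord_less a by auto
    have "a \<noteq> 0" "a div half_ord p \<noteq> 0" using a t(1) by (auto simp: odd_pos elim!: dvdE)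
    have "q dvd half_ord p * (a div half_ord p)"
      using exceptional_prime_dvd[OF a q] t(1) by simp
    moreover have "\<not> q dvd a div half_ord p"
      using \<open>prime q\<close> \<open>prime_factors (a div half_ord p) = {p}\<close> \<open>a div half_ord p \<noteq> 0\<close> \<open>p < q\<close>
      by (auto simp: in_prime_factors_iff dest: prime_factorsI)
    ultimately have "q dvd half_ord p" using \<open>prime q\<close> prime_dvd_mult_iff by blast
    moreover have "half_ord p \<noteq> 0" using t(1) \<open>a \<noteq> 0\<close> by (metis dvd_0_left_iff)
    ultimately have "q \<le> half_ord p" by (simp add: dvd_imp_le)
    then show False using t(2) \<open>p < q\<close> by simp
  qed
  show ?thesis
  proof (rule ccontr)
    assume "p \<noteq> q"
    then have "p < q \<or> q < p" by arith
    then show False using contra assms(2,3) by blast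
  qed
qed

lemma finite_exceptional_primes:
  assumes "odd a"
  shows "finite (exceptional_primes a)"
proof (rule finite_subset)
  show "exceptional_primes a \<subseteq> prime_factors a"
    using exceptional_prime_dvd[OF assms] odd_pos[OF assms]
    by (auto simp: exceptional_primes_def in_prime_factors_iff)
qed simp

lemma cyclotomic_num_dvd_exceptional_den:
  assumes a: "odd a" and no_primitive: "\<And>p. prime p \<Longrightarrow> p dvd 2^a + 1 \<Longrightarrow> half_ord p \<noteq> a"
  shows "cyclotomic_num a dvd \<Prod>(exceptional_primes a) * cyclotomic_den a"
proof (rule multiplicity_le_imp_dvd)
  show "cyclotomic_num a \<noteq> 0" using cyclotomic_num_pos by (rule gr_implies_not0)
next
  fix p :: nat assume p: "prime p"
  define E where "E = exceptional_primes a"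
  have E: "finite E" "\<forall>q\<in>E. prime q" using finite_exceptional_primes[OF a] by (auto simp: E_def exceptional_primes_def)
  then have "\<Prod>E \<noteq> 0" by (auto simp: prime_gt_0_nat)
  then have mult: "multiplicity p (\<Prod>E * cyclotomic_den a) = of_bool (p \<in> E) + multiplicity p (cyclotomic_den a)"
    using p E cyclotomic_den_pos[of a] by (simp add: prime_elem_multiplicity_mult_distrib multiplicity_prod_primes)
  show "multiplicity p (cyclotomic_num a) \<le> multiplicity p (\<Prod>E * cyclotomic_den a)"
  proof (cases "p dvd 2^a + 1")
    case True
    then have "p \<in> E \<longleftrightarrow> prime_factors (a div half_ord p) = {p}" using p by (simp add: E_def exceptional_primes_def)
    then show ?thesis using multiplicity_cyclotomic_num_den[OF a p True no_primitive[OF p True]] mult by (cases "p \<in> E") auto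
  next
    case False
    have "\<not> p dvd 2^(a div \<Prod>T) + 1" if "T \<in> even_subsets (prime_factors a)" for T
    proof
      assume "p dvd 2^(a div \<Prod>T) + 1"
      moreover have "\<Prod>T dvd a"
        using that odd_pos[OF a] by (intro prod_dvd_if_subset_prime_factors) (auto simp: even_subsets_def)
      then have "a div \<Prod>T dvd a" by (metis dvd_div_mult_self dvd_triv_left)
      ultimately show False using False pow2_plus1_dvd[OF a] dvd_trans by blast
    qed
    then have "\<not> p dvd cyclotomic_num a" using p by (simp add: cyclotomic_num_def prime_dvd_prod_iff)
    then show ?thesis by (simp add: not_dvd_imp_multiplicity_0)
  qed
qed

lemma prod_one_plus_half_pow_le:
  fixes n :: nat
  assumes "n \<ge> 1" "M \<subseteq> {1..n}"
  shows "(\<Prod>m\<in>M. 1 + (1/2::real)^m) \<le> 3 - 3 * (1/2)^n"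
  using assms
proof (induction n arbitrary: M rule: nat_induct_at_least)
  case base
  then have "M = {} \<or> M = {1}" by auto
  then show ?case by auto
next
  case (Suc n)
  define h :: real where "h = (1/2)^n"
  have h: "0 \<le> h" "h \<le> 1/2"
    using power_decreasing[of 1 n "1/2::real"] Suc.hyps by (auto simp: h_def)
  have hs: "(1/2::real)^Suc n = h/2" by (simp add: h_def)
  have IH: "(\<Prod>m\<in>M - {Suc n}. 1 + (1/2::real)^m) \<le> 3 - 3 * h"
    using Suc.prems by (intro Suc.IH[unfolded h_def[symmetric]]) (auto simp: le_Suc_eq)
  show ?case
  proof (cases "Suc n \<in> M")
    case False
    then have "(\<Prod>m\<in>M. 1 + (1/2::real)^m) \<le> 3 - 3 * h" using IH by simp
    also have "\<dots> \<le> 3 - 3 * (h/2)" using h by simp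
    finally show ?thesis unfolding hs .
  next
    case True
    have "(\<Prod>m\<in>M. 1 + (1/2::real)^m) = (1 + (1/2)^Suc n) * (\<Prod>m\<in>M - {Suc n}. 1 + (1/2::real)^m)"
      by (rule prod.remove[OF finite_subset[OF Suc.prems finite_atLeastAtMost] True])
    also have "\<dots> = (1 + h/2) * (\<Prod>m\<in>M - {Suc n}. 1 + (1/2::real)^m)" by (simp only: hs)
    also have "\<dots> \<le> (1 + h/2) * (3 - 3 * h)"
      using IH h by (intro mult_left_mono) auto
    also have "\<dots> \<le> 3 - 3 * (h/2)" using h by (simp add: algebra_simps)
    finally show ?thesis unfolding hs .
  qed
qed

lemma prod_pow2_plus1_less:
  assumes "finite M" "0 \<notin> M"
  shows "(\<Prod>m\<in>M. (2::nat)^m + 1) < 3 * 2 ^ (\<Sum>M)"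
proof -
  define n where "n = max 1 (Max (insert 0 M))"
  have "n \<ge> 1" "M \<subseteq> {1..n}"
    using assms by (auto simp: n_def le_max_iff_disj Suc_le_eq intro!: gr0I)
  have "real (\<Prod>m\<in>M. 2^m + 1) = (\<Prod>m\<in>M. (2::real)^m * (1 + (1/2)^m))"
    by (simp add: algebra_simps power_one_over)
  also have "\<dots> = 2 ^ (\<Sum>M) * (\<Prod>m\<in>M. 1 + (1/2::real)^m)"
    by (simp add: prod.distrib power_sum)
  also have "\<dots> \<le> 2 ^ (\<Sum>M) * (3 - 3 * (1/2)^n)"
    using prod_one_plus_half_pow_le[OF \<open>n \<ge> 1\<close> \<open>M \<subseteq> {1..n}\<close>] by (intro mult_left_mono) auto
  also have "\<dots> < 2 ^ (\<Sum>M) * 3" by (intro mult_strict_left_mono) auto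
  finally have "real (\<Prod>m\<in>M. 2^m + 1) < real (3 * 2 ^ (\<Sum>M))" by simp
  then show ?thesis by (simp only: of_nat_less_iff)
qed

lemma inj_on_div_prod_prime_factors:
  fixes a :: nat
  assumes "a \<noteq> 0"
  shows "inj_on (\<lambda>T. a div \<Prod>T) (Pow (prime_factors a))"
proof (rule inj_onI)
  fix T1 T2 assume T: "T1 \<in> Pow (prime_factors a)" "T2 \<in> Pow (prime_factors a)"
    and eq: "a div \<Prod>T1 = a div \<Prod>T2"
  have "\<Prod>T1 dvd a" "\<Prod>T2 dvd a" using T assms by (auto intro: prod_dvd_if_subset_prime_factors)
  then have "\<Prod>T1 = \<Prod>T2" using eq assms by (metis dvd_div_eq_0_iff dvd_div_mult_self mult_left_cancel)
  moreover have "finite Ti" "\<forall>q\<in>Ti. prime q" if "Ti \<in> Pow (prime_factors a)" for Ti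
    using that finite_subset by auto
  ultimately show "T1 = T2" using T prime_factors_prod_primes by metis
qed

lemma totient_alternating_sum:
  fixes a :: nat
  assumes "a > 0"
  shows "(\<Sum>T\<in>Pow (prime_factors a). (-1)^card T * real (a div \<Prod>T)) = real (totient a)"
proof -
  define Q where "Q = prime_factors a"
  have "real (totient a) = real a * (\<Prod>p\<in>Q. 1 - 1 / real p)"
    unfolding Q_def by (rule totient_formula2)
  also have "(\<Prod>p\<in>Q. 1 - 1 / real p) = (\<Sum>T\<in>Pow Q. (-1)^card T * (\<Prod>p\<in>T. 1 / real p) * (\<Prod>p\<in>Q - T. 1))"
    by (rule prod_diff_conv_sum) (simp add: Q_def)
  also have "real a * \<dots> = (\<Sum>T\<in>Pow Q. (-1)^card T * real (a div \<Prod>T))"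
    unfolding sum_distrib_left
  proof (intro sum.cong refl)
    fix T assume "T \<in> Pow Q"
    then have "\<Prod>T dvd a" using assms by (intro prod_dvd_if_subset_prime_factors) (auto simp: Q_def)
    then show "real a * ((-1)^card T * (\<Prod>p\<in>T. 1 / real p) * (\<Prod>p\<in>Q - T. 1)) = (-1)^card T * real (a div \<Prod>T)"
      by (simp add: prod_dividef real_of_nat_div)
  qed
  finally show ?thesis by (simp add: Q_def)
qed

lemma sum_even_subsets_div_prod:
  fixes a :: nat
  assumes "a > 0"
  shows "(\<Sum>T\<in>even_subsets (prime_factors a). a div \<Prod>T) = (\<Sum>T\<in>odd_subsets (prime_factors a). a div \<Prod>T) + totient a"
proof -
  have "real (totient a) = (\<Sum>T\<in>even_subsets (prime_factors a). real (a div \<Prod>T)) - (\<Sum>T\<in>odd_subsets (prime_factors a). real (a div \<Prod>T))"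
    using totient_alternating_sum[OF assms] sum_Pow_alternating[of "prime_factors a" "\<lambda>T. real (a div \<Prod>T)"]
    by simp
  then show ?thesis by (simp flip: of_nat_sum)
qed

lemma pow2_sum_even_subsets_le_cyclotomic_num:
  "2 ^ (\<Sum>T\<in>even_subsets (prime_factors a). a div \<Prod>T) \<le> cyclotomic_num a"
  unfolding cyclotomic_num_def power_sum by (intro prod_mono) auto

lemma cyclotomic_den_less:
  fixes a :: nat
  assumes "a > 0"
  shows "cyclotomic_den a < 3 * 2 ^ (\<Sum>T\<in>odd_subsets (prime_factors a). a div \<Prod>T)"
proof -
  define m where "m T = a div \<Prod>T" for T
  define S where "S = odd_subsets (prime_factors a)"
  have inj: "inj_on m S" unfolding m_def S_def odd_subsets_def
    by (rule inj_on_subset[OF inj_on_div_prod_prime_factors]) (use assms in auto)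
  have "0 \<notin> m ` S"
  proof
    assume "0 \<in> m ` S"
    then obtain T where "T \<in> S" "a div \<Prod>T = 0" by (auto simp: m_def)
    moreover have "\<Prod>T dvd a" if "T \<in> S" for T
      using that assms by (intro prod_dvd_if_subset_prime_factors) (auto simp: S_def odd_subsets_def)
    ultimately show False using assms by (metis dvd_div_eq_0_iff not_gr0)
  qed
  then have "(\<Prod>x\<in>m ` S. (2::nat)^x + 1) < 3 * 2 ^ \<Sum>(m ` S)"
    by (intro prod_pow2_plus1_less) (simp add: S_def)
  moreover have "(\<Prod>x\<in>m ` S. (2::nat)^x + 1) = cyclotomic_den a"
    using prod.reindex[OF inj, of "\<lambda>x. (2::nat)^x + 1"] by (simp add: cyclotomic_den_def m_def S_def)
  moreover have "\<Sum>(m ` S) = (\<Sum>T\<in>S. a div \<Prod>T)"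
    using sum.reindex[OF inj, of "\<lambda>x. x"] by (simp add: m_def)
  ultimately show ?thesis by (simp add: S_def)
qed

lemma totient_ge_4:
  fixes a :: nat
  assumes "odd a" "a \<ge> 5"
  shows "totient a \<ge> 4"
proof -
  have "coprime 2 a" using odd_imp_coprime_nat[OF assms(1)] by (simp add: coprime_commute)
  moreover have "gcd (a - 2) a = gcd 2 a" using assms(2) by (intro gcd_diff2_nat) simp
  ultimately have "coprime (a - 2) a" by (metis coprime_iff_gcd_eq_1)
  have "{1, 2, a - 2, a - 1} \<subseteq> totatives a"
    using \<open>coprime 2 a\<close> \<open>coprime (a - 2) a\<close> coprime_diff_one_left_nat[of a] assms(2)
    by (simp add: in_totatives_iff)
  then have "card {1, 2, a - 2, a - 1} \<le> totient a"
    unfolding totient_def by (rule card_mono[OF finite_totatives])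
  moreover have "card {1, 2, a - 2, a - (1::nat)} = 4" using assms(2) by (simp add: card_insert_if; arith)
  ultimately show ?thesis by simp
qed

lemma pow2_ge_3_times:
  fixes p :: nat
  assumes "p \<ge> 5"
  shows "3 * p \<le> 2^(p - 1)"
  using assms
proof (induction p rule: nat_induct_at_least)
  case (Suc n)
  then have "(2::nat)^(Suc n - 1) = 2 * 2^(n - 1)" by (cases n) auto
  then show ?case using Suc by simp
qed simp

lemma prod_exceptional_primes_le:
  fixes a :: nat
  assumes a: "odd a" "a \<ge> 5"
  shows "3 * \<Prod>(exceptional_primes a) \<le> 2 ^ totient a"
proof -
  have "(2::nat)^4 \<le> 2 ^ totient a" using totient_ge_4[OF a] by (intro power_increasing) auto
  show ?thesis
  proof (cases "exceptional_primes a = {}")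
    case False
    then obtain s where s: "s \<in> exceptional_primes a" by blast
    then have "exceptional_primes a = {s}" using exceptional_primes_unique[OF a(1)] by blast
    have "prime s" "s dvd a" using s exceptional_prime_dvd[OF a(1)] by (auto simp: exceptional_primes_def)
    then have "totient s \<le> totient a" using totient_dvd_mono odd_pos[OF a(1)] by blast
    then have "s - 1 \<le> totient a" using totient_prime[OF \<open>prime s\<close>] by simp
    then have "2^(s - 1) \<le> (2::nat) ^ totient a" by (intro power_increasing) auto
    have "3 * s \<le> 2 ^ totient a"
    proof (cases "s \<ge> 5")
      case True
      then show ?thesis using pow2_ge_3_times \<open>2^(s - 1) \<le> 2 ^ totient a\<close> order_trans by blast
    qed (use \<open>(2::nat)^4 \<le> 2 ^ totient a\<close> in simp)
    then show ?thesis using \<open>exceptional_primes a = {s}\<close> by simp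
  qed (use \<open>(2::nat)^4 \<le> 2 ^ totient a\<close> in simp)
qed

lemma exists_prime_half_ord_eq:
  fixes a :: nat
  assumes a: "odd a" "a \<ge> 5"
  shows "\<exists>p. prime p \<and> p dvd 2^a + 1 \<and> half_ord p = a"
proof (rule ccontr)
  assume no_primitive: "\<not> ?thesis"
  define E where "E = \<Prod>(exceptional_primes a)"
  define S where "S = (\<Sum>T\<in>odd_subsets (prime_factors a). a div \<Prod>T)"
  have "E > 0" unfolding E_def
    by (intro prod_pos) (auto simp: exceptional_primes_def prime_gt_0_nat)
  have "cyclotomic_num a dvd E * cyclotomic_den a"
    using cyclotomic_num_dvd_exceptional_den[OF a(1)] no_primitive by (auto simp: E_def)
  have "(2::nat) ^ totient a * 2 ^ S = 2 ^ (\<Sum>T\<in>even_subsets (prime_factors a). a div \<Prod>T)"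
    using sum_even_subsets_div_prod[of a] odd_pos[OF a(1)] by (simp add: S_def power_add)
  also have "\<dots> \<le> cyclotomic_num a" by (rule pow2_sum_even_subsets_le_cyclotomic_num)
  also have "\<dots> \<le> E * cyclotomic_den a"
    using \<open>cyclotomic_num a dvd E * cyclotomic_den a\<close> \<open>E > 0\<close> cyclotomic_den_pos by (intro dvd_imp_le) auto
  also have "\<dots> < E * (3 * 2 ^ S)"
    using cyclotomic_den_less[of a] odd_pos[OF a(1)] \<open>E > 0\<close> by (simp add: S_def)
  finally have "2 ^ totient a * 2 ^ S < (3 * E) * 2 ^ S" by (simp only: ac_simps)
  then have "2 ^ totient a < 3 * E" by (simp only: mult_less_cancel2)
  then show False using prod_exceptional_primes_le[OF a] by (simp add: E_def)
qed

text \<open>At \<open>k = 0\<close> the integer exponents in \<open>fac\<close> are \<open>-1\<close> and give \<open>5 * (2/3) * (3/2) = 5\<close>.\<close>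
definition fac_numerator :: "nat \<Rightarrow> nat" where
  "fac_numerator k = (if k = 0 then 5 else 5 * 3^(k - 1) * (2^(2*k - 1) + 1))"

lemma fac_eq: "fac k = of_nat (fac_numerator k) / 2^(k - 1)"
proof (cases "k = 0")
  case False
  then have "int k - 1 = int (k - 1)" "2 * int k - 1 = int (2*k - 1)" by auto
  then have "fac k = 5 * (3/2)^(k - 1) * (2^(2*k - 1) + 1)"
    unfolding fac_def by (simp only: power_int_of_nat)
  also have "\<dots> = of_nat (fac_numerator k) / 2^(k - 1)"
    using False by (simp add: fac_numerator_def power_divide distrib_left add_divide_distrib)
  finally show ?thesis .
qed (simp add: fac_def fac_numerator_def)

lemma fac_numerator_pos: "fac_numerator k > 0"
  by (simp add: fac_numerator_def)

lemma prod_list_fac: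
  "prod_list (map fac ks) = of_nat (prod_list (map fac_numerator ks)) / 2 ^ (\<Sum>k\<leftarrow>ks. k - 1)"
  by (induction ks) (simp_all add: fac_eq power_add)

lemma odd_prod_list_fac_numerator: "odd (prod_list (map fac_numerator ks))"
  by (induction ks) (simp_all add: fac_numerator_def)

lemma odd_mult_pow2_eq:
  fixes x y i j :: nat
  assumes "odd x" "odd y" "x * 2^i = y * 2^j"
  shows "x = y \<and> i = j"
proof -
  have "i = j" if "i \<le> j" "odd x" "x * 2^i = y * 2^j" for x y i j :: nat
  proof -
    have "x * 2^i = (y * 2^(j - i)) * 2^i"
      using that(1,3) by (metis le_add_diff_inverse2 mult.assoc power_add)
    then have "x = y * 2^(j - i)" by simp
    then have "j - i = 0" using that(2) by (cases "j - i") auto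
    then show ?thesis using that(1) by simp
  qed
  then have "i = j" using assms by (metis nle_le)
  then show ?thesis using assms(3) by simp
qed

lemma prod_list_fac_eq_iff:
  "prod_list (map fac xs) = prod_list (map fac ys) \<longleftrightarrow>
    prod_list (map fac_numerator xs) = prod_list (map fac_numerator ys) \<and> (\<Sum>k\<leftarrow>xs. k - 1) = (\<Sum>k\<leftarrow>ys. k - 1)"
  (is "?lhs \<longleftrightarrow> ?N xs = ?N ys \<and> ?D xs = ?D ys")
proof
  assume ?lhs
  then have "of_nat (?N xs * 2 ^ ?D ys) = (of_nat (?N ys * 2 ^ ?D xs) :: rat)"
    by (simp add: prod_list_fac field_simps)
  then have "?N xs * 2 ^ ?D ys = ?N ys * 2 ^ ?D xs" by (simp only: of_nat_eq_iff)
  then show "?N xs = ?N ys \<and> ?D xs = ?D ys"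
    using odd_mult_pow2_eq odd_prod_list_fac_numerator by metis
qed (simp add: prod_list_fac)

lemma prime_dvd_prod_list:
  fixes p :: nat
  assumes "prime p" "p dvd prod_list (map f xs)"
  shows "\<exists>x\<in>set xs. p dvd f x"
  using assms(2)
proof (induction xs)
  case Nil
  then show ?case using assms(1) by (simp add: prime_gt_1_nat)
qed (auto simp: prime_dvd_mult_iff[OF assms(1)])

lemma five_not_dvd_pow2_plus1:
  fixes a :: nat
  assumes "odd a"
  shows "\<not> (5::nat) dvd 2^a + 1"
proof
  assume "5 dvd (2::nat)^a + 1"
  then have "(5::int) dvd 2^a + 1" by (metis int_dvd_int_iff of_nat_numeral of_nat_add of_nat_power of_nat_1)
  moreover obtain j where j: "a = 2*j + 1" using assms oddE by blast
  then have "(2::int)^a + 1 = 2 * 4^j + 1" by (simp add: power_mult)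
  moreover have "[(4::int)^j = (-1)^j] (mod 5)" by (rule cong_pow) (simp add: cong_iff_dvd_diff)
  then have "[2 * (4::int)^j + 1 = 2 * (-1)^j + 1] (mod 5)" by (intro cong_add cong_mult) auto
  ultimately have "(5::int) dvd 2 * (-1)^j + 1" using cong_dvd_iff by metis
  then show False by (cases "even j") auto
qed

lemma primitive_prime_not_dvd_fac_numerator:
  fixes p K y :: nat
  assumes p: "prime p" "p dvd 2^(2*K - 1) + 1" "half_ord p = 2*K - 1" and "K \<ge> 3" "y < K"
  shows "\<not> p dvd fac_numerator y"
proof -
  have a: "odd (2*K - 1)" using assms(4) by simp
  have smaller: "\<not> p dvd 2^b + 1" if "odd b" "b < 2*K - 1" for b
  proof
    assume "p dvd 2^b + 1"
    then have "half_ord p dvd b" using prime_dvd_pow2_plus1_iff_half_ord_dvd[OF p(1) a p(2) that(1)] by simp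
    then have "2*K - 1 \<le> b" using p(3) dvd_imp_le[OF _ odd_pos[OF that(1)]] by simp
    then show False using that(2) by simp
  qed
  have "\<not> p dvd 5" using five_not_dvd_pow2_plus1[OF a] p(2) primes_dvd_imp_eq[OF p(1), of 5] by auto
  show ?thesis
  proof (cases "y = 0")
    case False
    have "\<not> p dvd 3" using smaller[of 1] assms(4) by simp
    then have "\<not> p dvd 3^(y - 1)" using prime_dvd_power[OF p(1)] by blast
    moreover have "\<not> p dvd 2^(2*y - 1) + 1" using smaller[of "2*y - 1"] False assms(5) by simp
    moreover have "fac_numerator y = 5 * 3^(y - 1) * (2^(2*y - 1) + 1)"
      using False by (simp add: fac_numerator_def)
    ultimately show ?thesis
      using \<open>\<not> p dvd 5\<close> by (simp only: prime_dvd_mult_iff[OF p(1)]) blast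
  qed (simp add: fac_numerator_def \<open>\<not> p dvd 5\<close>)
qed

lemma prod_list_fac_neq:
  assumes "\<forall>y\<in>set ys. y < K"
  shows "prod_list (map fac (K # xs)) \<noteq> prod_list (map fac ys)"
proof
  define N where "N zs = prod_list (map fac_numerator zs)" for zs
  assume "prod_list (map fac (K # xs)) = prod_list (map fac ys)"
  then have N: "N (K # xs) = N ys" and D: "(\<Sum>k\<leftarrow>K # xs. k - 1) = (\<Sum>k\<leftarrow>ys. k - 1)"
    unfolding prod_list_fac_eq_iff N_def by blast+
  consider "K = 0" | "K = 1" | "K = 2" | "K \<ge> 3" by linarith
  then show False
  proof cases
    case 1
    then have "ys = []" using assms by (cases ys) auto
    then show False using N 1 by (simp add: N_def fac_numerator_def)
  next
    case 2
    then have "N ys = 5 ^ length ys" using assms by (induction ys) (auto simp: N_def fac_numerator_def)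
    moreover have "3 dvd N (K # xs)" using 2 by (simp add: N_def fac_numerator_def)
    ultimately have "(3::nat) dvd 5" using N prime_dvd_power[of "3::nat" 5] by auto
    then show False by simp
  next
    case 3
    then have "(\<Sum>k\<leftarrow>ys. k - 1) = 0" using assms by (induction ys) auto
    moreover have "(\<Sum>k\<leftarrow>K # xs. k - 1) \<ge> 1" using 3 by simp
    ultimately show False using D by linarith
  next
    case 4
    have "odd (2*K - 1)" "2*K - 1 \<ge> 5" using 4 by auto
    then obtain p where p: "prime p" "p dvd 2^(2*K - 1) + 1" "half_ord p = 2*K - 1"
      using exists_prime_half_ord_eq by blast
    have "fac_numerator K = (5 * 3^(K - 1)) * (2^(2*K - 1) + 1)" using 4 by (simp add: fac_numerator_def)
    then have "p dvd fac_numerator K" using p(2) by (metis dvd_mult)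
    then have "p dvd N ys" using N by (metis N_def dvd_mult2 list.simps(9) prod_list.Cons)
    then obtain y where "y \<in> set ys" "p dvd fac_numerator y"
      using prime_dvd_prod_list[OF p(1)] by (auto simp: N_def)
    then show False using primitive_prime_not_dvd_fac_numerator[OF p 4] assms by blast
  qed
qed

lemma sorted_prod_list_fac_inj:
  assumes "sorted_wrt (\<ge>) ks" "sorted_wrt (\<ge>) ls" "prod_list (map fac ks) = prod_list (map fac ls)"
  shows "ks = ls"
  using assms
proof (induction ks arbitrary: ls)
  case Nil
  then show ?case using prod_list_fac_neq[of "[]"] by (cases ls) (auto simp del: prod_list.Cons)
next
  case (Cons k ks)
  show ?case
  proof (cases ls)
    case Nil
    then show ?thesis using Cons.prems(3) prod_list_fac_neq[of "[]" k ks] by simp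
  next
    case (Cons l ls')
    consider "k = l" | "l < k" | "k < l" by linarith
    then show ?thesis
    proof cases
      case 1
      have "fac k \<noteq> 0" using fac_numerator_pos[of k] by (simp add: fac_eq)
      then show ?thesis using Cons.IH Cons.prems Cons 1 by simp
    next
      case 2
      then have "\<forall>y\<in>set (l # ls'). y < k" using Cons.prems(2) Cons by auto
      then show ?thesis using prod_list_fac_neq[of "l # ls'" k ks] Cons.prems(3) Cons by simp
    next
      case 3
      then have "\<forall>y\<in>set (k # ks). y < l" using Cons.prems(1) by auto
      then show ?thesis using prod_list_fac_neq[of "k # ks" l ls'] Cons.prems(3) Cons by simp
    qed
  qed
qed

theorem lemma5:
  fixes ks ls :: "nat list"
  assumes "sorted_wrt (\<ge>) ks" and "sorted_wrt (\<ge>) ls"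
    and "(\<Prod>i<length ks. fac (ks ! i)) = (\<Prod>j<length ls. fac (ls ! j))"
  shows "length ks = length ls \<and> ks = ls"
proof -
  have "(\<Prod>i<length xs. fac (xs ! i)) = prod_list (map fac xs)" for xs
    by (simp add: prod.list_conv_set_nth atLeast0LessThan)
  then show ?thesis using sorted_prod_list_fac_inj assms by metis
qed

end
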